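(* Let $d\ge1$, $1<r<\infty$, $k\in\mathbb{Z}$, $C_1>0$, and $\alpha>\frac{d-1}{r'}$ where $r'=r/(r-1)$. Let $\mathcal{Q}$ be a finite collection of pairwise disjoint cubes $Q\subset\mathbb{R}^d$ with side length $\ell(Q)\le C_1 2^k$, and for each $Q\in\mathcal{Q}$ let $b^Q$ be an integrable scalar-valued function supported on $Q$ with $\int b^Q=0$. Then for every $x\in\mathbb{R}^d$, $$R_k\Big(\sum_{Q\in\mathcal{Q}}b^Q\Big)(x)^r\le C\,(2^k)^{\alpha r}\sum_{Q\in\mathcal{Q}}\ell(Q)^{-\alpha r}R_k(b^Q)(x)^r,$$ where $C$ depends only on $\alpha,r,d,C_1$.
   Context: $A_tb(x)=\frac{1}{|B(0,t)|}\int_{B(0,t)}b(x+y)\,dy$. For $(a_t)_{t\in I}$, $\hat V^r(a_t)_{t\in I}=\sup_{t_0<\dots<t_J\in I}(\sum_{j=1}^J|a_{t_j}-a_{t_{j-1}}|^r)^{1/r}$ and $V^r(a_t)_{t\in I}=\sup_{t\in I}|a_t|+\hat V^r(a_t)_{t\in I}$. Define $R_kb(x)=V^r(A_tb(x))_{t\in[2^k,2^{k+1}]}$. *)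

theory Defs
  imports "HOL-Analysis.Analysis"
begin

definition epowr :: "ennreal \<Rightarrow> real \<Rightarrow> ennreal" where
  "epowr x p = (if x = \<infinity> then \<infinity> else ennreal (enn2real x powr p))"

definition avg :: "real \<Rightarrow> ('a::euclidean_space \<Rightarrow> complex) \<Rightarrow> 'a \<Rightarrow> complex" where
  "avg t b x = (1 / measure lebesgue (ball (0::'a) t)) *\<^sub>R
      (LINT y : ball (0::'a) t | lebesgue. b (x + y))"

definition hatV :: "real \<Rightarrow> (real \<Rightarrow> complex) \<Rightarrow> real set \<Rightarrow> ennreal" where
  "hatV r a I = (SUP (J, t) \<in> {(J::nat, t::nat \<Rightarrow> real).
        (\<forall>j<J. t j < t (Suc j)) \<and> (\<forall>j\<le>J. t j \<in> I)}.
      ennreal ((\<Sum>j=1..J. norm (a (t j) - a (t (j - 1))) powr r) powr (1 / r)))"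

definition Vr :: "real \<Rightarrow> (real \<Rightarrow> complex) \<Rightarrow> real set \<Rightarrow> ennreal" where
  "Vr r a I = (SUP t\<in>I. ennreal (norm (a t))) + hatV r a I"

definition Rk :: "real \<Rightarrow> int \<Rightarrow> ('a::euclidean_space \<Rightarrow> complex) \<Rightarrow> 'a \<Rightarrow> ennreal" where
  "Rk r k b x = Vr r (\<lambda>t. avg t b x) {2 powr real_of_int k .. 2 powr real_of_int (k + 1)}"

text \<open>Q is a cube of side length l: it lies between the open and the closed axis-parallel box
  with lower corner a and side l (so open, closed and half-open cubes are all allowed).\<close>
definition is_cube :: "'a::euclidean_space set \<Rightarrow> real \<Rightarrow> bool" where
  "is_cube Q l \<longleftrightarrow> l > 0 \<and> (\<exists>a. box a (a + l *\<^sub>R One) \<subseteq> Q \<and> Q \<subseteq> cbox a (a + l *\<^sub>R One))"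

end

theory Submission
  imports Defs
begin

(* Since b^Q is supported in the cube Q and has mean zero, A_t b^Q(x) vanishes unless
   the sphere S(x,t) meets Q (otherwise the ball B(x,t) either misses Q or contains it).  Cubes of side
   about sigma meeting S(x,t) lie in a spherical shell of width ~ d*sigma, so by volume counting the
   weights l(Q)^beta, beta = alpha r' > d - 1, of the cubes meeting a sphere sum, over all dyadic scales
   sigma <= C1 2^k, to at most K (2^k)^beta.  The weighted Hoelder inequality with weights u_Q = l(Q)^alpha
   then bounds |sum_Q a_Q|^r by (K (2^k)^beta)^(r-1) sum_Q l(Q)^(-alpha r) |a_Q|^r, both for the values
   A_t b^Q(x) and for their increments between two times (where at most twice the weight is involved);
   since beta (r-1) = alpha r this is the factor (2^k)^(alpha r) of the statement. *)

section \<open>Averages over balls\<close>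

lemma lebesgue_translate:
  "distr lebesgue lebesgue (\<lambda>y. x + y) = (lebesgue :: 'a::euclidean_space measure)"
proof -
  have T: "(\<lambda>y. x + (\<Sum>j\<in>(Basis::'a set). (1 * (y \<bullet> j)) *\<^sub>R j)) = (\<lambda>y. x + y)"
    by (simp add: euclidean_representation)
  have "lebesgue = density (distr lebesgue lebesgue
      (\<lambda>y. x + (\<Sum>j\<in>(Basis::'a set). (1 * (y \<bullet> j)) *\<^sub>R j))) (\<lambda>_. (\<Prod>j\<in>(Basis::'a set). \<bar>1::real\<bar>))"
    by (rule lebesgue_affine_euclidean) simp
  then show ?thesis unfolding T by (simp add: density_1)
qed

lemma translate_measurable: "(\<lambda>y. x + y) \<in> (lebesgue :: 'a::euclidean_space measure) \<rightarrow>\<^sub>M lebesgue"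
proof -
  have T: "(\<lambda>y. x + (\<Sum>j\<in>(Basis::'a set). (1 * (y \<bullet> j)) *\<^sub>R j)) = (\<lambda>y. x + y)"
    by (simp add: euclidean_representation)
  show ?thesis using lebesgue_affine_measurable[of "\<lambda>_. 1::real" x] unfolding T by simp
qed

lemma integrable_translate:
  fixes b :: "'a::euclidean_space \<Rightarrow> 'b::{banach, second_countable_topology}"
  assumes "integrable lebesgue b"
  shows "integrable lebesgue (\<lambda>y. b (x + y))"
proof -
  have "integrable (distr lebesgue lebesgue (\<lambda>y. x + y)) b"
    using assms by (simp add: lebesgue_translate)
  then show ?thesis using integrable_distr_eq[OF translate_measurable, of b] by auto
qed

lemma integral_translate:
  fixes b :: "'a::euclidean_space \<Rightarrow> 'b::{banach, second_countable_topology}"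
  assumes "integrable lebesgue b"
  shows "(LINT y | lebesgue. b (x + y)) = (LINT y | lebesgue. b y)"
proof -
  have "(LINT y | lebesgue. b (x + y)) = (LINT y | distr lebesgue lebesgue (\<lambda>y. x + y). b y)"
    by (rule integral_distr[symmetric, OF translate_measurable]) (use assms in auto)
  then show ?thesis by (simp add: lebesgue_translate)
qed

lemma avg_sum:
  fixes b :: "'i \<Rightarrow> 'a::euclidean_space \<Rightarrow> complex"
  assumes "finite I" "\<And>i. i \<in> I \<Longrightarrow> integrable lebesgue (b i)"
  shows "avg t (\<lambda>y. \<Sum>i\<in>I. b i y) x = (\<Sum>i\<in>I. avg t (b i) x)"
proof -
  have int: "integrable lebesgue (\<lambda>y. indicator (ball 0 t) y *\<^sub>R b i (x + y))" if "i \<in> I" for i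
    by (rule integrable_mult_indicator) (use integrable_translate[OF assms(2)[OF that]] in auto)
  have "(LINT y : ball 0 t | lebesgue. (\<Sum>i\<in>I. b i (x + y)))
      = (\<Sum>i\<in>I. LINT y : ball 0 t | lebesgue. b i (x + y))"
    unfolding set_lebesgue_integral_def scaleR_sum_right
    by (rule Bochner_Integration.integral_sum) (use int in auto)
  then show ?thesis unfolding avg_def by (simp add: scaleR_sum_right)
qed

text \<open>Cancellation: if b has mean zero and vanishes outside a connected set S that does not meet
  the sphere S(x,t), then the ball B(x,t) either misses S or contains it, so A_t b(x) = 0.\<close>

lemma avg_vanishes:
  fixes b :: "'a::euclidean_space \<Rightarrow> complex"
  assumes "integrable lebesgue b" "\<And>y. y \<notin> S \<Longrightarrow> b y = 0" "(LINT y | lebesgue. b y) = 0"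
    "connected S" "S \<inter> sphere x t = {}" "t > 0"
  shows "avg t b x = 0"
proof (cases "S \<inter> ball x t = {}")
  case True
  have "indicator (ball 0 t) y *\<^sub>R b (x + y) = 0" for y
  proof (cases "y \<in> ball 0 t")
    case True
    then have "x + y \<notin> S" using \<open>S \<inter> ball x t = {}\<close> by (auto simp: dist_norm)
    then show ?thesis using assms(2) by simp
  qed simp
  then have "(\<lambda>y. indicator (ball 0 t) y *\<^sub>R b (x + y)) = (\<lambda>_. 0)" by (rule ext)
  then show ?thesis unfolding avg_def set_lebesgue_integral_def by simp
next
  case False
  have "S \<subseteq> ball x t"
  proof (rule ccontr)
    assume "\<not> S \<subseteq> ball x t"
    then have "S \<inter> frontier (ball x t) \<noteq> {}"
      using connected_Int_frontier[OF assms(4) False] by blast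
    then show False using assms(5,6) by simp
  qed
  have "indicator (ball 0 t) y *\<^sub>R b (x + y) = b (x + y)" for y
  proof (cases "y \<in> ball 0 t")
    case False
    then have "x + y \<notin> S" using \<open>S \<subseteq> ball x t\<close> by (auto simp: dist_norm)
    then show ?thesis using assms(2) by simp
  qed simp
  then show ?thesis unfolding avg_def set_lebesgue_integral_def
    using integral_translate[OF assms(1), of x] assms(3) by simp
qed

section \<open>Weighted Hoelder inequality for finite sums\<close>

text \<open>(sum c_i)^r \<le> (sum w_i^r')^(r-1) * sum w_i^(-r) c_i^r with r' = r/(r-1), for positive c_i:
  Jensen's inequality for the convex function s \<mapsto> s^r with respect to the probability
  weights p_i = w_i^r' / W, W = sum w^r', applied to the points y_i = W c_i / w_i^r'.\<close>

lemma holder_sum_pos: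
  fixes c w :: "'i \<Rightarrow> real"
  assumes J: "finite J" "J \<noteq> {}" and w: "\<And>i. i \<in> J \<Longrightarrow> w i > 0"
    and c: "\<And>i. i \<in> J \<Longrightarrow> c i > 0" and r: "r > 1"
  shows "(\<Sum>i\<in>J. c i) powr r
    \<le> (\<Sum>i\<in>J. w i powr (r/(r-1))) powr (r-1) * (\<Sum>i\<in>J. w i powr (-r) * c i powr r)"
proof -
  define q where "q = r/(r-1)"
  have "q * (r - 1) = r" using r by (simp add: q_def)
  then have qr: "q - q * r = - r" by (simp add: algebra_simps)
  define W where "W = (\<Sum>i\<in>J. w i powr q)"
  have W: "W > 0" unfolding W_def using J w by (intro sum_pos) (auto, force)
  define p where "p i = w i powr q / W" for i
  define y where "y i = W * c i / w i powr q" for i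
  have jensen: "(\<Sum>i\<in>J. p i *\<^sub>R y i) powr r \<le> (\<Sum>i\<in>J. p i * y i powr r)"
  proof (rule convex_on_sum[OF J powr_convex])
    show "1 \<le> r" using r by simp
    show "(\<Sum>i\<in>J. p i) = 1" unfolding p_def W_def using W W_def
      by (simp add: sum_divide_distrib[symmetric])
    show "\<And>i. i \<in> J \<Longrightarrow> 0 \<le> p i" unfolding p_def using W by simp
    show "y i \<in> {0<..}" if "i \<in> J" for i
      unfolding y_def using W c[OF that] w[OF that] by (simp add: divide_pos_pos)
  qed
  have mean: "(\<Sum>i\<in>J. p i *\<^sub>R y i) = (\<Sum>i\<in>J. c i)"
  proof (rule sum.cong)
    fix i assume "i \<in> J"
    then have "w i > 0" by (rule w)
    then show "p i *\<^sub>R y i = c i" using W by (simp add: p_def y_def)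
  qed simp
  have summand: "p i * y i powr r = W powr (r - 1) * (w i powr (-r) * c i powr r)" if "i \<in> J" for i
  proof -
    have "y i powr r = W powr r * c i powr r / w i powr (q * r)"
      unfolding y_def using W c[OF that] w[OF that]
      by (simp add: powr_divide powr_mult powr_powr)
    then have "p i * y i powr r = W powr r / W * c i powr r * (w i powr q / w i powr (q * r))"
      unfolding p_def by simp
    also have "w i powr q / w i powr (q * r) = w i powr (-r)"
      using w[OF that] qr by (simp add: powr_diff[symmetric])
    also have "W powr r / W = W powr (r - 1)"
      using W by (simp add: powr_diff)
    finally show ?thesis by simp
  qed
  show ?thesis
    using jensen mean summand unfolding W_def q_def by (simp add: sum_distrib_left)
qed

lemma holder_support:
  fixes c u :: "'i \<Rightarrow> real"
  assumes I: "finite I" and r: "r > 1" and u: "\<And>i. i \<in> I \<Longrightarrow> u i > 0"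
    and c: "\<And>i. i \<in> I \<Longrightarrow> c i \<ge> 0"
    and W: "(\<Sum>i\<in>{i\<in>I. c i \<noteq> 0}. u i powr (r/(r-1))) \<le> B"
  shows "(\<Sum>i\<in>I. c i) powr r \<le> B powr (r - 1) * (\<Sum>i\<in>I. u i powr (-r) * c i powr r)"
proof -
  let ?Z = "{i\<in>I. c i \<noteq> 0}"
  have Z: "?Z \<subseteq> I" and fZ: "finite ?Z" using I by auto
  have sumZ: "(\<Sum>i\<in>I. c i) = (\<Sum>i\<in>?Z. c i)"
    by (rule sum.mono_neutral_right[OF I Z]) auto
  show ?thesis
  proof (cases "?Z = {}")
    case True
    then show ?thesis using sumZ by (simp add: sum_nonneg)
  next
    case False
    have "(\<Sum>i\<in>I. c i) powr r
        \<le> (\<Sum>i\<in>?Z. u i powr (r/(r-1))) powr (r-1) * (\<Sum>i\<in>?Z. u i powr (-r) * c i powr r)"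
      unfolding sumZ using u c by (intro holder_sum_pos[OF fZ False _ _ r]) (auto simp: less_le)
    also have "\<dots> \<le> B powr (r - 1) * (\<Sum>i\<in>I. u i powr (-r) * c i powr r)"
      using W r by (intro mult_mono powr_mono2 sum_mono2[OF I Z]) (auto intro: sum_nonneg)
    finally show ?thesis .
  qed
qed

lemma powr_add_le:
  fixes x y :: real
  assumes "x \<ge> 0" "y \<ge> 0" "r > 1"
  shows "(x + y) powr r \<le> 2 powr (r - 1) * (x powr r + y powr r)"
proof -
  define c where "c i = (if i = (0::nat) then x else y)" for i
  have "(\<Sum>i\<in>{i\<in>{0::nat, 1}. c i \<noteq> 0}. (1::real) powr (r/(r-1))) 
      \<le> (\<Sum>i\<in>{0::nat, 1}. (1::real) powr (r/(r-1)))"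
    by (rule sum_mono2) auto
  then have W: "(\<Sum>i\<in>{i\<in>{0::nat, 1}. c i \<noteq> 0}. (1::real) powr (r/(r-1))) \<le> 2" by simp
  have "(\<Sum>i\<in>{0::nat, 1}. c i) powr r
      \<le> 2 powr (r - 1) * (\<Sum>i\<in>{0::nat, 1}. 1 powr (-r) * c i powr r)"
    by (rule holder_support[where u = "\<lambda>_. 1", OF _ assms(3) _ _ W]) (use assms in \<open>auto simp: c_def\<close>)
  then show ?thesis by (simp add: c_def)
qed

section \<open>Counting cubes that meet a sphere\<close>

lemma pow_diff_le:
  fixes a b :: real
  assumes "0 \<le> a" "a \<le> b"
  shows "b ^ n - a ^ n \<le> real n * (b - a) * b ^ (n - 1)"
proof (induction n)
  case 0 then show ?case by simp
next
  case (Suc n)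
  have "b ^ Suc n - a ^ Suc n = b * (b ^ n - a ^ n) + (b - a) * a ^ n" by (simp add: algebra_simps)
  also have "\<dots> \<le> b * (real n * (b - a) * b ^ (n - 1)) + (b - a) * b ^ n"
    using Suc assms by (intro add_mono mult_left_mono mult_right_mono power_mono) auto
  also have "\<dots> = real (Suc n) * (b - a) * b ^ (Suc n - 1)"
    by (cases n) (simp_all add: algebra_simps)
  finally show ?case .
qed

lemma shell_measure:
  fixes x :: "'a::euclidean_space"
  assumes "t \<ge> 0" "w \<ge> 0"
  shows "measure lborel (cball x (t + w) - ball x (t - w))
     \<le> 2 * real DIM('a) * w * unit_ball_vol (DIM('a)) * (t + w) ^ (DIM('a) - 1)"
proof -
  let ?d = "DIM('a)" and ?v = "unit_ball_vol (DIM('a))"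
  have v: "?v > 0" by simp
  have d1: "?d \<ge> 1" by (simp add: DIM_positive Suc_leI)
  have cb: "measure lborel (cball x (t + w)) = ?v * (t + w) ^ ?d"
    using content_cball[of "t + w" x] assms by simp
  show ?thesis
  proof (cases "t - w \<ge> 0")
    case True
    have b: "measure lborel (ball x (t - w)) = ?v * (t - w) ^ ?d"
      using content_ball[of "t - w" x] True by simp
    have "measure lborel (cball x (t + w) - ball x (t - w))
        = measure lborel (cball x (t + w)) - measure lborel (ball x (t - w))"
      by (rule measure_Diff) (use assms in \<open>auto simp: emeasure_cball\<close>)
    also have "\<dots> = ?v * ((t + w) ^ ?d - (t - w) ^ ?d)" using cb b by (simp add: algebra_simps)
    also have "\<dots> \<le> ?v * (real ?d * ((t + w) - (t - w)) * (t + w) ^ (?d - 1))"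
      using True assms v by (intro mult_left_mono pow_diff_le) auto
    finally show ?thesis by (simp add: algebra_simps)
  next
    case False
    have "measure lborel (cball x (t + w) - ball x (t - w)) \<le> measure lborel (cball x (t + w))"
      by (rule measure_mono_fmeasurable)
         (use emeasure_cball[of "t+w" x] assms in \<open>auto simp: fmeasurable_def\<close>)
    also have "\<dots> = ?v * ((t + w) * (t + w) ^ (?d - 1))"
      using cb d1 by (metis One_nat_def Suc_diff_le diff_Suc_Suc minus_nat.diff_0 power_Suc)
    also have "\<dots> \<le> ?v * ((2 * real ?d * w) * (t + w) ^ (?d - 1))"
    proof -
      have "t + w \<le> 2 * w" using False by simp
      also have "\<dots> \<le> 2 * real ?d * w"
        using d1 assms mult_right_mono[of 1 "real ?d" w] by simp
      finally show ?thesis using v assms by (intro mult_left_mono mult_right_mono) auto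
    qed
    finally show ?thesis by (simp add: algebra_simps)
  qed
qed

lemma cube_diam:
  fixes a y z :: "'a::euclidean_space"
  assumes "y \<in> cbox a (a + l *\<^sub>R One)" "z \<in> cbox a (a + l *\<^sub>R One)"
  shows "dist y z \<le> real DIM('a) * l"
proof -
  have "dist y z \<le> (\<Sum>b\<in>Basis. \<bar>(y - z) \<bullet> b\<bar>)" unfolding dist_norm by (rule norm_le_l1)
  also have "\<dots> \<le> (\<Sum>b\<in>(Basis::'a set). l)"
  proof (rule sum_mono)
    fix b :: 'a assume b: "b \<in> Basis"
    have "a \<bullet> b \<le> y \<bullet> b" "y \<bullet> b \<le> a \<bullet> b + l" "a \<bullet> b \<le> z \<bullet> b" "z \<bullet> b \<le> a \<bullet> b + l"
      using assms b by (auto simp: mem_box inner_add_left)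
    then show "\<bar>(y - z) \<bullet> b\<bar> \<le> l" by (simp add: inner_diff_left abs_le_iff)
  qed
  finally show ?thesis by simp
qed

lemma cube_in_shell:
  fixes a x :: "'a::euclidean_space"
  assumes "cbox a (a + l *\<^sub>R One) \<inter> sphere x t \<noteq> {}" "real DIM('a) * l \<le> w"
  shows "cbox a (a + l *\<^sub>R One) \<subseteq> cball x (t + w) - ball x (t - w)"
proof
  fix y assume y: "y \<in> cbox a (a + l *\<^sub>R One)"
  from assms(1) obtain z where z: "z \<in> cbox a (a + l *\<^sub>R One)" "dist x z = t"
    by (auto simp: sphere_def)
  have "dist y z \<le> w" using cube_diam[OF y z(1)] assms(2) by simp
  then have "dist x y \<le> t + w" "dist x y \<ge> t - w"
    using z(2) dist_triangle[of x y z] dist_triangle[of x z y] by (auto simp: dist_commute)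
  then show "y \<in> cball x (t + w) - ball x (t - w)" by auto
qed

text \<open>Cubes of side at most sigma with disjoint interiors that meet S(x,t) all lie in one shell of
  half-width d sigma, so their total volume is bounded by the volume of that shell.\<close>

lemma sphere_cubes_volume:
  fixes x :: "'a::euclidean_space" and a :: "'i \<Rightarrow> 'a" and l :: "'i \<Rightarrow> real"
  assumes G: "finite G" and l: "\<And>i. i \<in> G \<Longrightarrow> 0 < l i \<and> l i \<le> \<sigma>"
    and disj: "\<And>i j. i \<in> G \<Longrightarrow> j \<in> G \<Longrightarrow> i \<noteq> j \<Longrightarrow>
        box (a i) (a i + l i *\<^sub>R One) \<inter> box (a j) (a j + l j *\<^sub>R One) = {}"
    and meet: "\<And>i. i \<in> G \<Longrightarrow> cbox (a i) (a i + l i *\<^sub>R One) \<inter> sphere x t \<noteq> {}"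
    and t: "t \<ge> 0" and \<sigma>: "\<sigma> \<ge> 0"
  shows "(\<Sum>i\<in>G. l i ^ DIM('a)) \<le> 2 * real DIM('a) * (real DIM('a) * \<sigma>)
      * unit_ball_vol (DIM('a)) * (t + real DIM('a) * \<sigma>) ^ (DIM('a) - 1)"
proof -
  let ?box = "\<lambda>i. box (a i) (a i + l i *\<^sub>R One)"
  define w where "w = real DIM('a) * \<sigma>"
  have w: "w \<ge> 0" using \<sigma> by (simp add: w_def)
  have "(\<Sum>i\<in>G. l i ^ DIM('a)) = (\<Sum>i\<in>G. measure lborel (?box i))"
    using l by (intro sum.cong) (auto simp: measure_lborel_box_eq inner_add_left less_imp_le)
  also have "\<dots> = measure lborel (\<Union>i\<in>G. ?box i)"
    by (rule measure_finite_Union[symmetric])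
       (use G disj in \<open>auto simp: disjoint_family_on_def emeasure_lborel_box_eq\<close>)
  also have "\<dots> \<le> measure lborel (cball x (t + w) - ball x (t - w))"
  proof (rule measure_mono_fmeasurable)
    show "(\<Union>i\<in>G. ?box i) \<subseteq> cball x (t + w) - ball x (t - w)"
    proof (intro UN_least)
      fix i assume i: "i \<in> G"
      have "cbox (a i) (a i + l i *\<^sub>R One) \<subseteq> cball x (t + w) - ball x (t - w)"
        using meet[OF i] l[OF i] unfolding w_def by (intro cube_in_shell) auto
      then show "?box i \<subseteq> cball x (t + w) - ball x (t - w)" using box_subset_cbox by blast
    qed
    show "(\<Union>i\<in>G. ?box i) \<in> sets lborel" using G by auto
    show "cball x (t + w) - ball x (t - w) \<in> fmeasurable lborel"
      using emeasure_cball[of "t + w" x] t w by (intro fmeasurable_Diff) (auto simp: fmeasurable_def)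
  qed
  also have "\<dots> \<le> 2 * real DIM('a) * w * unit_ball_vol (DIM('a)) * (t + w) ^ (DIM('a) - 1)"
    by (rule shell_measure[OF t w])
  finally show ?thesis unfolding w_def .
qed

lemma powr_comparable:
  fixes l \<sigma> \<beta> :: real
  assumes l: "\<sigma> / 2 < l" "l \<le> \<sigma>" and \<beta>: "\<beta> \<ge> 0"
  shows "l powr \<beta> \<le> 2 ^ n * \<sigma> powr (\<beta> - real n) * l ^ n"
proof -
  have pos: "l > 0" "\<sigma> > 0" using l by linarith+
  have "l powr \<beta> = l powr (\<beta> - real n) * l ^ n"
    using pos by (simp add: powr_realpow[symmetric] powr_add[symmetric])
  also have "l powr (\<beta> - real n) \<le> 2 ^ n * \<sigma> powr (\<beta> - real n)"
  proof (cases "\<beta> - real n \<ge> 0")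
    case True
    then have "l powr (\<beta> - real n) \<le> \<sigma> powr (\<beta> - real n)" using l pos by (intro powr_mono2) auto
    also have "\<dots> \<le> 2 ^ n * \<sigma> powr (\<beta> - real n)" by (simp add: mult_le_cancel_right1)
    finally show ?thesis .
  next
    case False
    have "l powr (\<beta> - real n) \<le> (\<sigma> / 2) powr (\<beta> - real n)"
      using l pos False by (intro powr_mono2') auto
    also have "\<dots> = 2 powr (real n - \<beta>) * \<sigma> powr (\<beta> - real n)"
      using pos by (simp add: powr_divide powr_minus_divide[symmetric] divide_powr_uminus)
    also have "2 powr (real n - \<beta>) \<le> 2 powr real n" using \<beta> by (intro powr_mono) auto
    finally show ?thesis using pos by (simp add: mult_right_mono powr_realpow)
  qed
  finally show ?thesis using pos by (simp add: mult_right_mono)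
qed

lemma dyadic_layer_bound:
  fixes x :: "'a::euclidean_space" and a :: "'i \<Rightarrow> 'a" and l :: "'i \<Rightarrow> real"
  assumes G: "finite G" and l: "\<And>i. i \<in> G \<Longrightarrow> \<sigma> / 2 < l i \<and> l i \<le> \<sigma>"
    and disj: "\<And>i j. i \<in> G \<Longrightarrow> j \<in> G \<Longrightarrow> i \<noteq> j \<Longrightarrow>
        box (a i) (a i + l i *\<^sub>R One) \<inter> box (a j) (a j + l j *\<^sub>R One) = {}"
    and meet: "\<And>i. i \<in> G \<Longrightarrow> cbox (a i) (a i + l i *\<^sub>R One) \<inter> sphere x t \<noteq> {}"
    and t: "t \<ge> 0" and \<sigma>: "\<sigma> > 0" and \<beta>: "\<beta> \<ge> 0"
  shows "(\<Sum>i\<in>G. l i powr \<beta>) \<le> 2 ^ DIM('a) * (2 * real DIM('a) * real DIM('a) * unit_ball_vol (DIM('a)))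
      * (t + real DIM('a) * \<sigma>) ^ (DIM('a) - 1) * \<sigma> powr (\<beta> - real DIM('a) + 1)"
proof -
  let ?d = "DIM('a)"
  define D where "D = real ?d"
  have "(\<Sum>i\<in>G. l i powr \<beta>) \<le> (\<Sum>i\<in>G. 2 ^ ?d * \<sigma> powr (\<beta> - D) * l i ^ ?d)"
    unfolding D_def using l \<beta> by (intro sum_mono powr_comparable) auto
  also have "\<dots> = 2 ^ ?d * \<sigma> powr (\<beta> - D) * (\<Sum>i\<in>G. l i ^ ?d)" by (simp add: sum_distrib_left)
  also have "\<dots> \<le> 2 ^ ?d * \<sigma> powr (\<beta> - D) * (2 * D * (D * \<sigma>) * unit_ball_vol ?d * (t + D * \<sigma>) ^ (?d - 1))"
    unfolding D_def using l \<sigma>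
    by (intro mult_left_mono sphere_cubes_volume[OF G _ disj meet t]) (auto, fastforce)
  also have "\<dots> = 2 ^ ?d * (2 * D * D * unit_ball_vol ?d) * (t + D * \<sigma>) ^ (?d - 1) * (\<sigma> powr (\<beta> - D) * \<sigma>)"
    by (simp add: algebra_simps)
  also have "\<sigma> powr (\<beta> - D) * \<sigma> = \<sigma> powr (\<beta> - D + 1)" using \<sigma> by (simp add: powr_add)
  finally show ?thesis unfolding D_def .
qed

lemma dyadic_layer:
  assumes "0 < l" "l \<le> s"
  shows "s / 2 ^ (Suc (nat \<lfloor>log 2 (s / l)\<rfloor>)) < l \<and> l \<le> s / 2 ^ (nat \<lfloor>log 2 (s / l)\<rfloor>)"
proof -
  define y where "y = log 2 (s / l)"
  have sl: "s / l \<ge> 1" using assms by simp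
  then have y0: "y \<ge> 0" unfolding y_def by simp
  define m where "m = nat \<lfloor>y\<rfloor>"
  have m: "real m \<le> y" "y < real m + 1" using y0 unfolding m_def by linarith+
  have "2 ^ m = (2::real) powr real m" by (simp add: powr_realpow)
  also have "\<dots> \<le> 2 powr y" using m by simp
  also have "\<dots> = s / l" unfolding y_def using sl by simp
  finally have lower: "2 ^ m \<le> s / l" .
  have "s / l = 2 powr y" unfolding y_def using sl by simp
  also have "\<dots> < 2 powr (real m + 1)" using m by simp
  also have "\<dots> = 2 ^ Suc m" by (simp add: powr_add powr_realpow)
  finally have upper: "s / l < 2 ^ Suc m" .
  from lower upper assms show ?thesis unfolding m_def[symmetric] y_def[symmetric]
    by (auto simp: field_simps)
qed

lemma sum_geometric_layers:
  fixes f :: "'i \<Rightarrow> real" and g :: "'i \<Rightarrow> nat"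
  assumes M: "finite M" and layer: "\<And>m. (\<Sum>i\<in>{i\<in>M. g i = m}. f i) \<le> K * q ^ m"
    and K: "K \<ge> 0" and q: "0 \<le> q" "q < 1"
  shows "(\<Sum>i\<in>M. f i) \<le> K / (1 - q)"
proof -
  define N where "N = Suc (Max (g ` M))"
  have gN: "g ` M \<subseteq> {..<N}" unfolding N_def using M by (auto simp: le_imp_less_Suc)
  have "(\<Sum>i\<in>M. f i) = (\<Sum>m<N. \<Sum>i\<in>{i\<in>M. g i = m}. f i)"
    by (rule sum.group[symmetric, OF M _ gN]) simp
  also have "\<dots> \<le> (\<Sum>m<N. K * q ^ m)" by (intro sum_mono layer)
  also have "\<dots> = K * ((1 - q ^ N) / (1 - q))"
    using q by (simp add: sum_distrib_left[symmetric] sum_gp_strict)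
  also have "\<dots> \<le> K * (1 / (1 - q))"
    using q K by (intro mult_left_mono divide_right_mono) auto
  finally show ?thesis by simp
qed

text \<open>Summing the dyadic layers: since \<beta> > d - 1 the layer bounds decay geometrically in m,
  so cubes of side at most s with disjoint interiors meeting S(x,t) satisfy
  sum l^\<beta> \<lesssim> (t + d s)^(d-1) s^(\<beta>-d+1).\<close>

lemma sphere_cubes_weight:
  fixes x :: "'a::euclidean_space" and a :: "'i \<Rightarrow> 'a" and l :: "'i \<Rightarrow> real"
  assumes I: "finite I" and l: "\<And>i. i \<in> I \<Longrightarrow> 0 < l i \<and> l i \<le> s"
    and disj: "\<And>i j. i \<in> I \<Longrightarrow> j \<in> I \<Longrightarrow> i \<noteq> j \<Longrightarrow>
        box (a i) (a i + l i *\<^sub>R One) \<inter> box (a j) (a j + l j *\<^sub>R One) = {}"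
    and \<beta>: "\<beta> > real DIM('a) - 1" and t: "t \<ge> 0" and s: "s > 0"
  shows "(\<Sum>i\<in>{i\<in>I. cbox (a i) (a i + l i *\<^sub>R One) \<inter> sphere x t \<noteq> {}}. l i powr \<beta>)
     \<le> 2 ^ DIM('a) * (2 * real DIM('a) * real DIM('a) * unit_ball_vol (DIM('a)))
        * (t + real DIM('a) * s) ^ (DIM('a) - 1) * s powr (\<beta> - real DIM('a) + 1)
        / (1 - 1 / 2 powr (\<beta> - real DIM('a) + 1))"
proof -
  let ?d = "DIM('a)"
  define D where "D = real ?d"
  define \<gamma> where "\<gamma> = \<beta> - D + 1"
  have \<gamma>: "\<gamma> > 0" using \<beta> unfolding \<gamma>_def D_def by simp
  have "real ?d \<ge> 1" by (simp add: DIM_positive Suc_leI)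
  then have \<beta>0: "\<beta> \<ge> 0" using \<beta> by linarith
  define q where "q = 1 / 2 powr \<gamma>"
  have q: "0 < q" "q < 1" using \<gamma> unfolding q_def by auto
  define K where "K = 2 ^ ?d * (2 * D * D * unit_ball_vol ?d) * (t + D * s) ^ (?d - 1) * s powr \<gamma>"
  have K: "K \<ge> 0" unfolding K_def D_def using t s by simp
  define M where "M = {i\<in>I. cbox (a i) (a i + l i *\<^sub>R One) \<inter> sphere x t \<noteq> {}}"
  define g where "g i = nat \<lfloor>log 2 (s / l i)\<rfloor>" for i
  have layer: "(\<Sum>i\<in>{i\<in>M. g i = m}. l i powr \<beta>)
      \<le> K * q ^ m" for m
  proof -
    define \<sigma> where "\<sigma> = s / 2 ^ m"
    have \<sigma>: "\<sigma> > 0" "\<sigma> \<le> s" using s unfolding \<sigma>_def by (auto simp: field_simps)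
    have "(\<Sum>i\<in>{i\<in>M. g i = m}. l i powr \<beta>)
        \<le> 2 ^ ?d * (2 * D * D * unit_ball_vol ?d) * (t + D * \<sigma>) ^ (?d - 1) * \<sigma> powr \<gamma>"
      unfolding D_def \<gamma>_def
    proof (rule dyadic_layer_bound[OF _ _ disj _ t \<sigma>(1) \<beta>0])
      show "\<sigma> / 2 < l i \<and> l i \<le> \<sigma>" if "i \<in> {i\<in>M. g i = m}" for i
        using that dyadic_layer[of "l i" s] l unfolding M_def g_def \<sigma>_def by auto
    qed (use I in \<open>auto simp: M_def\<close>)
    also have "\<dots> \<le> 2 ^ ?d * (2 * D * D * unit_ball_vol ?d) * (t + D * s) ^ (?d - 1) * \<sigma> powr \<gamma>"
      using t \<sigma> by (intro mult_right_mono mult_left_mono power_mono) (auto simp: D_def)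
    also have "\<sigma> powr \<gamma> = s powr \<gamma> * q ^ m"
    proof -
      have "((2::real) ^ m) powr \<gamma> = (2 powr \<gamma>) ^ m"
        by (simp add: powr_powr powr_realpow[symmetric] mult.commute)
      then show ?thesis using s unfolding \<sigma>_def q_def by (simp add: powr_divide power_one_over)
    qed
    finally show ?thesis unfolding K_def by (simp add: algebra_simps)
  qed
  have "(\<Sum>i\<in>M. l i powr \<beta>) \<le> K / (1 - q)"
    by (rule sum_geometric_layers[OF _ layer K]) (use I q in \<open>auto simp: M_def\<close>)
  then show ?thesis unfolding M_def K_def q_def \<gamma>_def D_def by simp
qed

text \<open>The constant of the counting estimate in the situation of the theorem:
  radii t \<in> [P, 2P] and side lengths l \<le> C1 P.\<close>

definition cube_count_const :: "nat \<Rightarrow> real \<Rightarrow> real \<Rightarrow> real" where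
  "cube_count_const d \<beta> C1 = 2 ^ d * (2 * real d * real d * unit_ball_vol d)
      * (2 + real d * C1) ^ (d - 1) * C1 powr (\<beta> - real d + 1) / (1 - 1 / 2 powr (\<beta> - real d + 1))"

lemma cube_count_const_pos:
  assumes "\<beta> > real d - 1" "d \<ge> 1" "C1 > 0"
  shows "cube_count_const d \<beta> C1 > 0"
proof -
  have "1 - 1 / 2 powr (\<beta> - real d + 1) > 0" using assms(1) by simp
  moreover have "(2 + real d * C1) ^ (d - 1) > 0" using assms(3) by (simp add: add_pos_nonneg)
  ultimately show ?thesis unfolding cube_count_const_def using assms(2,3)
    by (intro divide_pos_pos mult_pos_pos) auto
qed

lemma sphere_cubes_weight_scaled:
  fixes x :: "'a::euclidean_space" and a :: "'i \<Rightarrow> 'a" and l :: "'i \<Rightarrow> real"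
  assumes I: "finite I" and l: "\<And>i. i \<in> I \<Longrightarrow> 0 < l i \<and> l i \<le> C1 * P"
    and disj: "\<And>i j. i \<in> I \<Longrightarrow> j \<in> I \<Longrightarrow> i \<noteq> j \<Longrightarrow>
        box (a i) (a i + l i *\<^sub>R One) \<inter> box (a j) (a j + l j *\<^sub>R One) = {}"
    and \<beta>: "\<beta> > real DIM('a) - 1" and t: "P \<le> t" "t \<le> 2 * P" and P: "P > 0" and C1: "C1 > 0"
  shows "(\<Sum>i\<in>{i\<in>I. cbox (a i) (a i + l i *\<^sub>R One) \<inter> sphere x t \<noteq> {}}. l i powr \<beta>)
     \<le> cube_count_const DIM('a) \<beta> C1 * P powr \<beta>"
proof -
  let ?d = "DIM('a)"
  define D where "D = real ?d"
  define \<gamma> where "\<gamma> = \<beta> - D + 1"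
  have den: "1 - 1 / 2 powr \<gamma> > 0" using \<beta> unfolding \<gamma>_def D_def by simp
  define K where "K = 2 ^ ?d * (2 * D * D * unit_ball_vol ?d)"
  have K: "K \<ge> 0" unfolding K_def D_def by simp
  have "(\<Sum>i\<in>{i\<in>I. cbox (a i) (a i + l i *\<^sub>R One) \<inter> sphere x t \<noteq> {}}. l i powr \<beta>)
     \<le> K * (t + D * (C1 * P)) ^ (?d - 1) * (C1 * P) powr \<gamma> / (1 - 1 / 2 powr \<gamma>)"
    unfolding K_def D_def \<gamma>_def
    by (rule sphere_cubes_weight[OF I l disj \<beta>]) (use t P C1 in auto)
  also have "\<dots> \<le> K * ((2 + D * C1) * P) ^ (?d - 1) * (C1 * P) powr \<gamma> / (1 - 1 / 2 powr \<gamma>)"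
    using t P C1 K den
    by (intro divide_right_mono mult_right_mono mult_left_mono power_mono) (auto simp: D_def algebra_simps)
  also have "\<dots> = (K * (2 + D * C1) ^ (?d - 1) * C1 powr \<gamma> / (1 - 1 / 2 powr \<gamma>))
      * (P ^ (?d - 1) * P powr \<gamma>)"
    using P C1 by (simp add: powr_mult power_mult_distrib)
  also have "P ^ (?d - 1) * P powr \<gamma> = P powr \<beta>"
  proof -
    have "P ^ (?d - 1) = P powr (D - 1)"
      using P by (simp add: D_def powr_realpow[symmetric] of_nat_diff DIM_positive Suc_leI)
    then show ?thesis using P by (simp add: powr_add[symmetric] \<gamma>_def)
  qed
  finally show ?thesis unfolding cube_count_const_def K_def D_def \<gamma>_def by simp
qed

section \<open>Variation of sums of functions with sparse supports\<close>

definition chains :: "real set \<Rightarrow> (nat \<times> (nat \<Rightarrow> real)) set" where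
  "chains T = {(J, \<tau>). (\<forall>j<J. \<tau> j < \<tau> (Suc j)) \<and> (\<forall>j\<le>J. \<tau> j \<in> T)}"

definition var_sum :: "real \<Rightarrow> (real \<Rightarrow> complex) \<Rightarrow> nat \<Rightarrow> (nat \<Rightarrow> real) \<Rightarrow> real" where
  "var_sum r f J \<tau> = (\<Sum>j=1..J. norm (f (\<tau> j) - f (\<tau> (j - 1))) powr r)"

lemma hatV_chains: "hatV r f T = (SUP (J, \<tau>) \<in> chains T. ennreal (var_sum r f J \<tau> powr (1 / r)))"
  unfolding hatV_def chains_def var_sum_def by simp

lemma var_sum_nonneg: "var_sum r f J \<tau> \<ge> 0"
  unfolding var_sum_def by (auto intro: sum_nonneg)

definition sup_part :: "real set \<Rightarrow> (real \<Rightarrow> complex) \<Rightarrow> real" where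
  "sup_part T f = enn2real (SUP t\<in>T. ennreal (norm (f t)))"

definition var_part :: "real \<Rightarrow> (real \<Rightarrow> complex) \<Rightarrow> real set \<Rightarrow> real" where
  "var_part r f T = enn2real (hatV r f T)"

lemma Vr_parts:
  assumes "Vr r f T \<noteq> \<infinity>" "r > 0"
  shows "sup_part T f \<ge> 0" "var_part r f T \<ge> 0"
    "Vr r f T = ennreal (sup_part T f + var_part r f T)"
    "\<And>t. t \<in> T \<Longrightarrow> norm (f t) \<le> sup_part T f"
    "\<And>J \<tau>. (J, \<tau>) \<in> chains T \<Longrightarrow> var_sum r f J \<tau> \<le> var_part r f T powr r"
proof -
  let ?A = "(SUP t\<in>T. ennreal (norm (f t)))" and ?B = "hatV r f T"
  have "?A + ?B \<noteq> \<infinity>" using assms(1) unfolding Vr_def .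
  then have "?A < top" "?B < top"
    by (simp_all only: infinity_ennreal_def ennreal_add_eq_top de_Morgan_disj less_top)
  then have A: "?A = ennreal (sup_part T f)" and B: "?B = ennreal (var_part r f T)"
    unfolding sup_part_def var_part_def by (simp_all only: ennreal_enn2real)
  show nn: "sup_part T f \<ge> 0" "var_part r f T \<ge> 0"
    by (auto simp: sup_part_def var_part_def enn2real_nonneg)
  show "Vr r f T = ennreal (sup_part T f + var_part r f T)"
    unfolding Vr_def A B using nn by (simp add: ennreal_plus)
  show "norm (f t) \<le> sup_part T f" if "t \<in> T" for t
  proof -
    from that have "ennreal (norm (f t)) \<le> ?A" by (rule SUP_upper)
    then show ?thesis unfolding A using nn by (simp add: ennreal_le_iff)
  qed
  show "var_sum r f J \<tau> \<le> var_part r f T powr r" if c: "(J, \<tau>) \<in> chains T" for J \<tau>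
  proof -
    have "ennreal (var_sum r f J \<tau> powr (1 / r)) \<le> ?B"
      unfolding hatV_chains using c by (force intro: SUP_upper2)
    then have le: "var_sum r f J \<tau> powr (1 / r) \<le> var_part r f T"
      unfolding B using nn by (simp add: ennreal_le_iff)
    have "var_sum r f J \<tau> = (var_sum r f J \<tau> powr (1 / r)) powr r"
      using var_sum_nonneg assms(2) by (simp add: powr_powr)
    also have "\<dots> \<le> var_part r f T powr r" using le assms(2) by (intro powr_mono2) auto
    finally show ?thesis .
  qed
qed

lemma epowr_Vr_parts:
  assumes "Vr r f T \<noteq> \<infinity>" "r > 0"
  shows "epowr (Vr r f T) r = ennreal ((sup_part T f + var_part r f T) powr r)"
  unfolding Vr_parts(3)[OF assms] epowr_def using Vr_parts(1,2)[OF assms] by (simp del: ennreal_plus)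

lemma epowr_Vr_le:
  assumes val: "\<And>t. t \<in> T \<Longrightarrow> norm (f t) powr r \<le> A"
    and var: "\<And>J \<tau>. (J, \<tau>) \<in> chains T \<Longrightarrow> var_sum r f J \<tau> \<le> A'"
    and A: "A \<ge> 0" "A' \<ge> 0" and r: "r > 1"
  shows "epowr (Vr r f T) r \<le> ennreal (2 powr (r - 1) * (A + A'))"
proof -
  define X where "X = A powr (1 / r)"
  define Y where "Y = A' powr (1 / r)"
  have XY: "X \<ge> 0" "Y \<ge> 0" by (simp_all add: X_def Y_def)
  have "norm (f t) \<le> X" if "t \<in> T" for t
  proof -
    have "norm (f t) = (norm (f t) powr r) powr (1 / r)" using r by (simp add: powr_powr)
    also have "\<dots> \<le> X" unfolding X_def using val[OF that] r by (intro powr_mono2) auto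
    finally show ?thesis .
  qed
  then have "(SUP t\<in>T. ennreal (norm (f t))) \<le> ennreal X"
    by (intro SUP_least ennreal_leI)
  moreover have "hatV r f T \<le> ennreal Y"
    unfolding hatV_chains Y_def using var r
    by (intro SUP_least) (auto intro!: ennreal_leI powr_mono2 var_sum_nonneg)
  ultimately have V: "Vr r f T \<le> ennreal (X + Y)"
    unfolding Vr_def using XY by (metis add_mono ennreal_plus)
  have "Vr r f T \<noteq> \<infinity>" using V by (auto simp: top_unique)
  have "enn2real (Vr r f T) \<le> enn2real (ennreal (X + Y))" by (rule enn2real_mono[OF V]) simp
  also have "\<dots> = X + Y" using XY by (intro enn2real_ennreal) simp
  finally have "enn2real (Vr r f T) \<le> X + Y" .
  then have "epowr (Vr r f T) r \<le> ennreal ((X + Y) powr r)"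
    unfolding epowr_def using \<open>Vr r f T \<noteq> \<infinity>\<close> r
    by (auto intro!: ennreal_leI powr_mono2 simp: enn2real_nonneg)
  also have "\<dots> \<le> ennreal (2 powr (r - 1) * (A + A'))"
  proof (rule ennreal_leI)
    have "(X + Y) powr r \<le> 2 powr (r - 1) * (X powr r + Y powr r)"
      by (rule powr_add_le[OF XY r])
    also have "X powr r + Y powr r = A + A'" using A r by (simp add: X_def Y_def powr_powr)
    finally show "(X + Y) powr r \<le> 2 powr (r - 1) * (A + A')" .
  qed
  finally show ?thesis .
qed

text \<open>Hoelder for an increment of a sum of functions: at each of the two times the active indices
  have total weight at most B, so all indices involved have weight at most 2B.\<close>

lemma sparse_sum_increment:
  fixes a :: "'i \<Rightarrow> real \<Rightarrow> complex"
  assumes I: "finite I" and r: "r > 1" and u: "\<And>i. i \<in> I \<Longrightarrow> u i > 0"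
    and W: "\<And>t. t \<in> {s, s'} \<Longrightarrow> (\<Sum>i\<in>{i\<in>I. a i t \<noteq> 0}. u i powr (r/(r-1))) \<le> B"
  shows "norm ((\<Sum>i\<in>I. a i s) - (\<Sum>i\<in>I. a i s')) powr r
    \<le> (2 * B) powr (r - 1) * (\<Sum>i\<in>I. u i powr (-r) * norm (a i s - a i s') powr r)"
proof -
  let ?Z = "\<lambda>t. {i\<in>I. a i t \<noteq> 0}" and ?w = "\<lambda>i. u i powr (r/(r-1))"
  have fin: "finite (?Z s)" "finite (?Z s')" using I by auto
  have "(\<Sum>i\<in>{i\<in>I. norm (a i s - a i s') \<noteq> 0}. ?w i) \<le> (\<Sum>i\<in>?Z s \<union> ?Z s'. ?w i)"
    using I by (intro sum_mono2) auto
  also have "\<dots> \<le> (\<Sum>i\<in>?Z s. ?w i) + (\<Sum>i\<in>?Z s'. ?w i)"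
    using sum_Un[OF fin, of ?w] by (simp add: sum_nonneg)
  also have "\<dots> \<le> 2 * B" using W[of s] W[of s'] by simp
  finally have Wboth: "(\<Sum>i\<in>{i\<in>I. norm (a i s - a i s') \<noteq> 0}. ?w i) \<le> 2 * B" .
  have "norm ((\<Sum>i\<in>I. a i s) - (\<Sum>i\<in>I. a i s')) \<le> (\<Sum>i\<in>I. norm (a i s - a i s'))"
    unfolding sum_subtractf[symmetric] by (rule norm_sum)
  then have "norm ((\<Sum>i\<in>I. a i s) - (\<Sum>i\<in>I. a i s')) powr r \<le> (\<Sum>i\<in>I. norm (a i s - a i s')) powr r"
    using r by (intro powr_mono2) auto
  also have "\<dots> \<le> (2 * B) powr (r - 1) * (\<Sum>i\<in>I. u i powr (-r) * norm (a i s - a i s') powr r)"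
    by (rule holder_support[OF I r u _ Wboth]) auto
  finally show ?thesis .
qed

lemma var_sum_sparse_sum:
  fixes a :: "'i \<Rightarrow> real \<Rightarrow> complex"
  assumes I: "finite I" and r: "r > 1" and u: "\<And>i. i \<in> I \<Longrightarrow> u i > 0"
    and W: "\<And>t. t \<in> T \<Longrightarrow> (\<Sum>i\<in>{i\<in>I. a i t \<noteq> 0}. u i powr (r/(r-1))) \<le> B"
    and c: "(J, \<tau>) \<in> chains T"
  shows "var_sum r (\<lambda>t. \<Sum>i\<in>I. a i t) J \<tau> \<le> (2 * B) powr (r - 1) * (\<Sum>i\<in>I. u i powr (-r) * var_sum r (a i) J \<tau>)"
proof -
  have \<tau>T: "\<tau> j \<in> T" if "j \<le> J" for j using c that unfolding chains_def by auto
  have "var_sum r (\<lambda>t. \<Sum>i\<in>I. a i t) J \<tau>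
      \<le> (\<Sum>j=1..J. (2 * B) powr (r - 1) * (\<Sum>i\<in>I. u i powr (-r) * norm (a i (\<tau> j) - a i (\<tau> (j - 1))) powr r))"
    unfolding var_sum_def using \<tau>T
    by (intro sum_mono sparse_sum_increment[OF I r u W]) auto
  also have "\<dots> = (2 * B) powr (r - 1) * (\<Sum>i\<in>I. u i powr (-r) * var_sum r (a i) J \<tau>)"
    by (simp add: sum_distrib_left var_sum_def) (rule sum.swap)
  finally show ?thesis .
qed

lemma Vr_sparse_sum_parts:
  fixes a :: "'i \<Rightarrow> real \<Rightarrow> complex" and u :: "'i \<Rightarrow> real"
  assumes I: "finite I" and r: "r > 1" and B: "B > 0" and u: "\<And>i. i \<in> I \<Longrightarrow> u i > 0"
    and W: "\<And>t. t \<in> T \<Longrightarrow> (\<Sum>i\<in>{i\<in>I. a i t \<noteq> 0}. u i powr (r/(r-1))) \<le> B"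
    and fin: "\<And>i. i \<in> I \<Longrightarrow> Vr r (a i) T \<noteq> \<infinity>"
  shows "epowr (Vr r (\<lambda>t. \<Sum>i\<in>I. a i t) T) r \<le> ennreal (2 powr (r - 1) * (2 * B) powr (r - 1)
    * (\<Sum>i\<in>I. u i powr (-r) * (sup_part T (a i) powr r + var_part r (a i) T powr r)))"
proof -
  have r0: "r > 0" using r by simp
  let ?S = "\<lambda>i. sup_part T (a i)" and ?H = "\<lambda>i. var_part r (a i) T" and ?v = "\<lambda>i. u i powr (-r)"
  note parts = Vr_parts[OF fin r0]
  define A where "A = (2 * B) powr (r - 1) * (\<Sum>i\<in>I. ?v i * ?S i powr r)"
  define A' where "A' = (2 * B) powr (r - 1) * (\<Sum>i\<in>I. ?v i * ?H i powr r)"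
  have val: "norm (\<Sum>i\<in>I. a i t) powr r \<le> A" if t: "t \<in> T" for t
  proof -
    have "norm (\<Sum>i\<in>I. a i t) powr r \<le> (\<Sum>i\<in>I. norm (a i t)) powr r"
      using r0 by (intro powr_mono2 norm_sum) auto
    also have "\<dots> \<le> B powr (r - 1) * (\<Sum>i\<in>I. ?v i * norm (a i t) powr r)"
      using W[OF t] by (intro holder_support[OF I r u]) auto
    also have "\<dots> \<le> A" unfolding A_def using parts(1,4) t B r
      by (intro mult_mono powr_mono2 sum_mono mult_left_mono) (auto intro: sum_nonneg)
    finally show ?thesis .
  qed
  have var: "var_sum r (\<lambda>t. \<Sum>i\<in>I. a i t) J \<tau> \<le> A'" if c: "(J, \<tau>) \<in> chains T" for J \<tau>
  proof -
    have "var_sum r (\<lambda>t. \<Sum>i\<in>I. a i t) J \<tau> \<le> (2 * B) powr (r - 1) * (\<Sum>i\<in>I. ?v i * var_sum r (a i) J \<tau>)"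
      by (rule var_sum_sparse_sum[OF I r u W c])
    also have "\<dots> \<le> A'" unfolding A'_def using parts(5)[OF _ c]
      by (intro mult_left_mono sum_mono) auto
    finally show ?thesis .
  qed
  have "epowr (Vr r (\<lambda>t. \<Sum>i\<in>I. a i t) T) r \<le> ennreal (2 powr (r - 1) * (A + A'))"
    by (rule epowr_Vr_le[OF val var _ _ r]) (auto simp: A_def A'_def intro!: mult_nonneg_nonneg sum_nonneg)
  also have "A + A' = (2 * B) powr (r - 1) * (\<Sum>i\<in>I. ?v i * (?S i powr r + ?H i powr r))"
    by (simp add: A_def A'_def distrib_left sum.distrib)
  finally show ?thesis by (simp add: mult.assoc)
qed

lemma Vr_sparse_sum:
  fixes a :: "'i \<Rightarrow> real \<Rightarrow> complex" and u :: "'i \<Rightarrow> real"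
  assumes I: "finite I" and r: "r > 1" and B: "B > 0" and u: "\<And>i. i \<in> I \<Longrightarrow> u i > 0"
    and W: "\<And>t. t \<in> T \<Longrightarrow> (\<Sum>i\<in>{i\<in>I. a i t \<noteq> 0}. u i powr (r/(r-1))) \<le> B"
  shows "epowr (Vr r (\<lambda>t. \<Sum>i\<in>I. a i t) T) r
    \<le> ennreal (2 powr r * (2 * B) powr (r - 1)) * (\<Sum>i\<in>I. ennreal (u i powr (-r)) * epowr (Vr r (a i) T) r)"
proof (cases "\<exists>i\<in>I. Vr r (a i) T = \<infinity>")
  case True
  then obtain i where i: "i \<in> I" "Vr r (a i) T = \<infinity>" by blast
  have "ennreal (u i powr (-r)) * epowr (Vr r (a i) T) r = \<infinity>"
    using i u[OF i(1)] by (simp add: epowr_def ennreal_mult_top)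
  then have "(\<Sum>i\<in>I. ennreal (u i powr (-r)) * epowr (Vr r (a i) T) r) = \<infinity>"
    using member_le_sum[OF i(1), of "\<lambda>i. ennreal (u i powr (-r)) * epowr (Vr r (a i) T) r"] I
    by (simp add: top_unique)
  then show ?thesis using B by (simp add: ennreal_mult_top)
next
  case False
  then have fin: "\<And>i. i \<in> I \<Longrightarrow> Vr r (a i) T \<noteq> \<infinity>" by blast
  have r0: "r > 0" using r by simp
  let ?S = "\<lambda>i. sup_part T (a i)" and ?H = "\<lambda>i. var_part r (a i) T" and ?v = "\<lambda>i. u i powr (-r)"
  have SH: "?S i powr r + ?H i powr r \<le> 2 * (?S i + ?H i) powr r" if "i \<in> I" for i
  proof -
    have "?S i powr r \<le> (?S i + ?H i) powr r" "?H i powr r \<le> (?S i + ?H i) powr r"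
      using Vr_parts(1,2)[OF fin[OF that] r0] r0 by (auto intro!: powr_mono2)
    then show ?thesis by simp
  qed
  have "2 powr (r - 1) * (2 * B) powr (r - 1) * (\<Sum>i\<in>I. ?v i * (?S i powr r + ?H i powr r))
      \<le> 2 powr (r - 1) * (2 * B) powr (r - 1) * (\<Sum>i\<in>I. ?v i * (2 * (?S i + ?H i) powr r))"
    using SH by (intro mult_left_mono sum_mono) auto
  also have "\<dots> = 2 powr r * (2 * B) powr (r - 1) * (\<Sum>i\<in>I. ?v i * (?S i + ?H i) powr r)"
    by (simp add: sum_distrib_left powr_diff mult_ac)
  finally have "epowr (Vr r (\<lambda>t. \<Sum>i\<in>I. a i t) T) r
      \<le> ennreal (2 powr r * (2 * B) powr (r - 1) * (\<Sum>i\<in>I. ?v i * (?S i + ?H i) powr r))"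
    using Vr_sparse_sum_parts[OF I r B u W fin] by (meson ennreal_leI order_trans)
  also have "\<dots> = ennreal (2 powr r * (2 * B) powr (r - 1)) * (\<Sum>i\<in>I. ennreal (?v i) * epowr (Vr r (a i) T) r)"
    by (simp add: epowr_Vr_parts[OF fin r0] ennreal_mult sum_ennreal[symmetric] sum_nonneg)
  finally show ?thesis .
qed

section \<open>The variational estimate\<close>

lemma is_cube_corners:
  assumes "\<forall>i\<in>I. is_cube (Q i) (l i)"
  obtains a where "\<And>i. i \<in> I \<Longrightarrow> l i > 0 \<and> box (a i) (a i + l i *\<^sub>R One) \<subseteq> Q i
    \<and> Q i \<subseteq> cbox (a i) (a i + l i *\<^sub>R One)"
  using assms unfolding is_cube_def by metis

text \<open>The key geometric estimate: for t \<in> [P, 2P] only cubes meeting the sphere S(x,t) can have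
  A_t b^Q(x) \<noteq> 0, and the weights l(Q)^\<beta> of those cubes sum to at most K P^\<beta>.\<close>

lemma active_cubes_weight:
  fixes x :: "'a::euclidean_space" and a :: "'i \<Rightarrow> 'a" and b :: "'i \<Rightarrow> 'a \<Rightarrow> complex"
  assumes I: "finite I"
    and cube: "\<And>i. i \<in> I \<Longrightarrow> l i > 0 \<and> box (a i) (a i + l i *\<^sub>R One) \<subseteq> Q i
      \<and> Q i \<subseteq> cbox (a i) (a i + l i *\<^sub>R One)"
    and small: "\<And>i. i \<in> I \<Longrightarrow> l i \<le> C1 * P"
    and disj: "\<And>i j. i \<in> I \<Longrightarrow> j \<in> I \<Longrightarrow> i \<noteq> j \<Longrightarrow> Q i \<inter> Q j = {}"
    and b: "\<And>i. i \<in> I \<Longrightarrow> integrable lebesgue (b i) \<and> (\<forall>y. y \<notin> Q i \<longrightarrow> b i y = 0)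
      \<and> (LINT y | lebesgue. b i y) = 0"
    and \<beta>: "\<beta> > real DIM('a) - 1" and t: "P \<le> t" "t \<le> 2 * P" and P: "P > 0" and C1: "C1 > 0"
  shows "(\<Sum>i\<in>{i\<in>I. avg t (b i) x \<noteq> 0}. l i powr \<beta>) \<le> cube_count_const DIM('a) \<beta> C1 * P powr \<beta>"
proof -
  let ?cube = "\<lambda>i. cbox (a i) (a i + l i *\<^sub>R One)"
  have "avg t (b i) x = 0" if i: "i \<in> I" and miss: "?cube i \<inter> sphere x t = {}" for i
  proof -
    have "\<And>y. y \<notin> ?cube i \<Longrightarrow> b i y = 0" using b[OF i] cube[OF i] by blast
    then show "avg t (b i) x = 0"
      using b[OF i] miss t P by (intro avg_vanishes[of "b i" "?cube i"]) (auto simp: convex_connected)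
  qed
  then have "{i\<in>I. avg t (b i) x \<noteq> 0} \<subseteq> {i\<in>I. ?cube i \<inter> sphere x t \<noteq> {}}" by blast
  then have "(\<Sum>i\<in>{i\<in>I. avg t (b i) x \<noteq> 0}. l i powr \<beta>)
      \<le> (\<Sum>i\<in>{i\<in>I. ?cube i \<inter> sphere x t \<noteq> {}}. l i powr \<beta>)"
    using I by (intro sum_mono2) auto
  also have "\<dots> \<le> cube_count_const DIM('a) \<beta> C1 * P powr \<beta>"
  proof (rule sphere_cubes_weight_scaled[OF I _ _ \<beta> t P C1])
    show "\<And>i. i \<in> I \<Longrightarrow> 0 < l i \<and> l i \<le> C1 * P" using cube small by blast
    show "box (a i) (a i + l i *\<^sub>R One) \<inter> box (a j) (a j + l j *\<^sub>R One) = {}"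
      if "i \<in> I" "j \<in> I" "i \<noteq> j" for i j
      using cube[OF that(1)] cube[OF that(2)] disj[OF that] by blast
  qed
  finally show ?thesis .
qed

lemma variation_at_scale:
  fixes r \<alpha> C1 :: real and x :: "'a::euclidean_space" and b :: "nat \<Rightarrow> 'a \<Rightarrow> complex"
  defines "\<beta> \<equiv> \<alpha> * (r / (r - 1))"
  assumes r: "1 < r" and C1: "0 < C1" and \<beta>: "\<beta> > real DIM('a) - 1" and I: "finite I"
    and cube: "\<forall>i\<in>I. is_cube (Q i) (l i) \<and> l i \<le> C1 * 2 powr real_of_int k"
    and disj: "\<forall>i\<in>I. \<forall>j\<in>I. i \<noteq> j \<longrightarrow> Q i \<inter> Q j = {}"
    and b: "\<forall>i\<in>I. integrable lebesgue (b i) \<and> (\<forall>y. y \<notin> Q i \<longrightarrow> b i y = 0)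
      \<and> (LINT y | lebesgue. b i y) = 0"
  shows "epowr (Rk r k (\<lambda>y. \<Sum>i\<in>I. b i y) x) r
    \<le> ennreal (2 powr r * (2 * cube_count_const DIM('a) \<beta> C1) powr (r - 1)
        * (2 powr real_of_int k) powr (\<alpha> * r))
      * (\<Sum>i\<in>I. ennreal (l i powr (- \<alpha> * r)) * epowr (Rk r k (b i) x) r)"
proof -
  define P where "P = 2 powr real_of_int k"
  define T where "T = {P .. 2 powr real_of_int (k + 1)}"
  define K where "K = cube_count_const DIM('a) \<beta> C1"
  have P: "P > 0" unfolding P_def by simp
  have K: "K > 0" unfolding K_def using cube_count_const_pos[OF \<beta> _ C1] by (simp add: DIM_positive Suc_leI)
  obtain a where corners: "\<And>i. i \<in> I \<Longrightarrow> l i > 0 \<and> box (a i) (a i + l i *\<^sub>R One) \<subseteq> Q i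
      \<and> Q i \<subseteq> cbox (a i) (a i + l i *\<^sub>R One)"
    using cube is_cube_corners[of I Q l] by blast
  have weight: "(\<Sum>i\<in>{i\<in>I. avg t (b i) x \<noteq> 0}. (l i powr \<alpha>) powr (r / (r - 1))) \<le> K * P powr \<beta>"
    if t: "t \<in> T" for t
  proof -
    have "(\<Sum>i\<in>{i\<in>I. avg t (b i) x \<noteq> 0}. (l i powr \<alpha>) powr (r / (r - 1)))
        = (\<Sum>i\<in>{i\<in>I. avg t (b i) x \<noteq> 0}. l i powr \<beta>)"
      by (simp add: powr_powr \<beta>_def)
    also have "\<dots> \<le> K * P powr \<beta>" unfolding K_def
      by (rule active_cubes_weight[OF I corners _ _ _ \<beta> _ _ P C1])
         (use cube disj b t in \<open>auto simp: P_def T_def powr_add\<close>)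
    finally show ?thesis .
  qed
  have "epowr (Vr r (\<lambda>t. \<Sum>i\<in>I. avg t (b i) x) T) r
      \<le> ennreal (2 powr r * (2 * (K * P powr \<beta>)) powr (r - 1))
        * (\<Sum>i\<in>I. ennreal ((l i powr \<alpha>) powr (-r)) * epowr (Vr r (\<lambda>t. avg t (b i) x) T) r)"
    by (rule Vr_sparse_sum[OF I r _ _ weight]) (use corners K P in force)+
  moreover have "2 powr r * (2 * (K * P powr \<beta>)) powr (r - 1) = 2 powr r * (2 * K) powr (r - 1) * P powr (\<alpha> * r)"
    using K P r by (simp add: powr_mult powr_powr \<beta>_def)
  moreover have "(\<lambda>t. avg t (\<lambda>y. \<Sum>i\<in>I. b i y) x) = (\<lambda>t. \<Sum>i\<in>I. avg t (b i) x)"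
    using avg_sum[OF I, of b] b by blast
  ultimately show ?thesis unfolding Rk_def T_def P_def K_def by (simp add: powr_powr mult.assoc)
qed

theorem lemma2p1:
  fixes r \<alpha> C1 :: real
  assumes "1 < r" and "0 < C1" and "\<alpha> > (real DIM('a::euclidean_space) - 1) / (r / (r - 1))"
  shows "\<exists>C>0. \<forall>(k::int) (I::nat set) (Q::nat \<Rightarrow> 'a set) (l::nat \<Rightarrow> real) (b::nat \<Rightarrow> 'a \<Rightarrow> complex).
    finite I \<and>
    (\<forall>i\<in>I. is_cube (Q i) (l i) \<and> l i \<le> C1 * 2 powr real_of_int k) \<and>
    (\<forall>i\<in>I. \<forall>j\<in>I. i \<noteq> j \<longrightarrow> Q i \<inter> Q j = {}) \<and>
    (\<forall>i\<in>I. integrable lebesgue (b i) \<and> (\<forall>x. x \<notin> Q i \<longrightarrow> b i x = 0) \<and>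
            (LINT x | lebesgue. b i x) = 0)
    \<longrightarrow> (\<forall>x::'a. epowr (Rk r k (\<lambda>y. \<Sum>i\<in>I. b i y) x) r
          \<le> ennreal (C * (2 powr real_of_int k) powr (\<alpha> * r)) *
             (\<Sum>i\<in>I. ennreal (l i powr (- \<alpha> * r)) * epowr (Rk r k (b i) x) r))"
proof -
  define \<beta> where "\<beta> = \<alpha> * (r / (r - 1))"
  have \<beta>: "\<beta> > real DIM('a) - 1"
    using assms(3) pos_divide_less_eq[of "r / (r - 1)"] assms(1) unfolding \<beta>_def by simp
  define C where "C = 2 powr r * (2 * cube_count_const DIM('a) \<beta> C1) powr (r - 1)"
  have "C > 0"
    using cube_count_const_pos[OF \<beta> _ assms(2)] unfolding C_def by (simp add: DIM_positive Suc_leI)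
  then show ?thesis
  proof (intro exI[of _ C] conjI allI impI)
    fix k I Q l and b :: "nat \<Rightarrow> 'a \<Rightarrow> complex" and x :: 'a
    assume "finite I \<and> (\<forall>i\<in>I. is_cube (Q i) (l i) \<and> l i \<le> C1 * 2 powr real_of_int k) \<and>
      (\<forall>i\<in>I. \<forall>j\<in>I. i \<noteq> j \<longrightarrow> Q i \<inter> Q j = {}) \<and>
      (\<forall>i\<in>I. integrable lebesgue (b i) \<and> (\<forall>x. x \<notin> Q i \<longrightarrow> b i x = 0) \<and>
        (LINT x | lebesgue. b i x) = 0)"
    then show "epowr (Rk r k (\<lambda>y. \<Sum>i\<in>I. b i y) x) r
        \<le> ennreal (C * (2 powr real_of_int k) powr (\<alpha> * r))
          * (\<Sum>i\<in>I. ennreal (l i powr (- \<alpha> * r)) * epowr (Rk r k (b i) x) r)"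
      unfolding C_def \<beta>_def by (elim conjE) (rule variation_at_scale[OF assms(1,2) \<beta>[unfolded \<beta>_def]])
  qed
qed

end
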